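(* Let $\kappa$ be strongly inaccessible and let $S\subseteq S^\kappa_{\mathrm{pr}}$ be stationary in $\kappa$ and non-reflecting. Then (1) $\mathrm{add}(\mathbf{nst}^{\mathrm{pr}}_\kappa)\le\mathfrak b_\kappa$, and (2) $\mathrm{add}(\mathbf{nst}^{\mathrm{pr}}_{\kappa,S})=\mathfrak b_\kappa$.
   Context: For a cardinal $\lambda$, $S^\lambda_{\mathrm{inc}}$ is the set of strongly inaccessible cardinals below $\lambda$. A set $S\subseteq\lambda$ is nowhere stationary if for every $\delta\le\lambda$ of uncountable cofinality, $S\cap\delta$ is nonstationary in $\delta$. $S\subseteq\kappa$ is non-reflecting if $S\cap\delta$ is nonstationary in $\delta$ for every $\delta<\kappa$ of uncountable cofinality. By induction on strongly inaccessible $\lambda$ one defines a forcing $\mathbb Q_\lambda$ and an ideal $\mathrm{id}(\mathbb Q_\lambda)$ on $2^\lambda$: $p\in\mathbb Q_\lambda$ iff $p\subseteq 2^{<\lambda}$ is closed under initial segments and there is a witness $(\tau,S,\langle N_\delta:\delta\in S\rangle)$ with: (i) $\tau$ is the trunk of $p$, the least node of $p$ having two immediate successors in $p$; (ii) if $\tau\trianglelefteq\eta\in p$ then $\eta^\frown0,\eta^\frown1\in p$; (iii) $S\subseteq S^\lambda_{\mathrm{inc}}$ is nowhere stationary; (iv) $N_\delta\in\mathrm{id}(\mathbb Q_\delta)$ for $\delta\in S$; (v) for limit $\delta<\lambda$ with $\delta\notin S$ and $\eta\in2^\delta$: $\eta\in p$ iff $\eta\restriction\sigma\in p$ for all $\sigma<\delta$;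 (vi) for $\delta\in S$ and $\eta\in 2^\delta$: $\eta\in p$ iff $\eta\restriction\sigma\in p$ for all $\sigma<\delta$ and $\eta\notin N_\delta$. The order is $q\le p$ iff $q\subseteq p$. $[p]$ is the set of $x\in 2^\lambda$ all of whose proper initial segments lie in $p$; for $\mathcal J\subseteq\mathbb Q_\lambda$, $\mathrm{set}_0(\mathcal J)=2^\lambda\setminus\bigcup_{p\in\mathcal J}[p]$. $A\in\mathrm{id}(\mathbb Q_\lambda)$ iff there are at most $\lambda$ predense sets $\mathcal J_i\subseteq\mathbb Q_\lambda$ with $A\subseteq\bigcup_i\mathrm{set}_0(\mathcal J_i)$. $\Pr(\lambda)$ means: there is a family $\{\Lambda_i:i<\lambda\}$ of maximal antichains of $\mathbb Q_\lambda$ such that no $p\in\mathbb Q_\lambda$ satisfies $[p]\subseteq\bigcap_{i<\lambda}\bigcup_{q\in\Lambda_i}[q]$; $S^\kappa_{\mathrm{pr}}=\{\lambda\in S^\kappa_{\mathrm{inc}}:\Pr(\lambda)\}$. $\mathbf{nst}^{\mathrm{pr}}_\kappa$ is the family of nowhere stationary subsets of $S^\kappa_{\mathrm{pr}}$, and $\mathbf{nst}^{\mathrm{pr}}_{\kappa,S}$ the family of nowhere stationary subsets of $S$, both ordered by $\subseteq^*$ (inclusion modulo a bounded subset of $\kappa$); the additivity of such a family is the least size of a subfamily having no $\subseteq^*$-upper bound in the family. $\mathfrak b_\kappa$ is the least size of a family $B\subseteq\kappa^\kappa$ with no $\le^*$-upper bound in $\kappa^\kappa$, where $f\le^*g$ means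 $f(i)\le g(i)$ for all but boundedly many $i<\kappa$. *)

theory Defs
  imports Main "HOL-Library.Countable_Set"
begin

text \<open>Ordinals below the strongly inaccessible cardinal kappa are the
elements of a type 'o of class wellorder whose order type is kappa (kappa itself is
represented by UNIV). An ordinal delta \<le> kappa is represented by the initial segment
{..<x} (delta = x) or UNIV (delta = kappa). A node of 2^{<lambda} of length alpha is
a pair (alpha, f) with f vanishing from alpha on; an element of 2^alpha is a function
vanishing from alpha on.\<close>

definition cofinal_in :: "'o::wellorder set \<Rightarrow> 'o set \<Rightarrow> bool" where
  "cofinal_in X D \<longleftrightarrow> X \<subseteq> D \<and> (\<forall>x\<in>D. \<exists>y\<in>X. x \<le> y)"

definition ord_closed_in :: "'o::wellorder set \<Rightarrow> 'o set \<Rightarrow> bool" where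
  "ord_closed_in X D \<longleftrightarrow>
     (\<forall>x\<in>D. (\<exists>y. y < x) \<and> (\<forall>y<x. \<exists>z\<in>X. y < z \<and> z < x) \<longrightarrow> x \<in> X)"

definition club_in :: "'o::wellorder set \<Rightarrow> 'o set \<Rightarrow> bool" where
  "club_in C D \<longleftrightarrow> C \<subseteq> D \<and> cofinal_in C D \<and> ord_closed_in C D"

definition stationary_in :: "'o::wellorder set \<Rightarrow> 'o set \<Rightarrow> bool" where
  "stationary_in T D \<longleftrightarrow> (\<forall>C. club_in C D \<longrightarrow> T \<inter> C \<noteq> {})"

definition uncountable_cof :: "'o::wellorder set \<Rightarrow> bool" where
  "uncountable_cof D \<longleftrightarrow> (\<forall>X. cofinal_in X D \<longrightarrow> uncountable X)"

text \<open>The ordinals \<le> delta, for delta given as an initial segment D.\<close>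
definition segs :: "'o::wellorder set \<Rightarrow> 'o set set" where
  "segs D = {{..<x} | x. x \<in> D} \<union> {D}"

definition nowhere_stationary :: "'o::wellorder set \<Rightarrow> 'o set \<Rightarrow> bool" where
  "nowhere_stationary S D \<longleftrightarrow> S \<subseteq> D \<and>
     (\<forall>E\<in>segs D. uncountable_cof E \<longrightarrow> \<not> stationary_in (S \<inter> E) E)"

definition non_reflecting :: "'o::wellorder set \<Rightarrow> bool" where
  "non_reflecting S \<longleftrightarrow>
     (\<forall>x. uncountable_cof {..<x} \<longrightarrow> \<not> stationary_in (S \<inter> {..<x}) {..<x})"

definition strongly_inaccessible :: "'o::wellorder set \<Rightarrow> bool" where
  "strongly_inaccessible D \<longleftrightarrow>
     uncountable D \<and>
     (\<forall>x\<in>D. (card_of {..<x}, card_of D) \<in> ordLess) \<and>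
     (\<forall>X. cofinal_in X D \<longrightarrow> (card_of X, card_of D) \<in> ordIso) \<and>
     (\<forall>x\<in>D. (card_of (Pow {..<x}), card_of D) \<in> ordLess)"

definition S_inc :: "'o::wellorder \<Rightarrow> 'o set" where
  "S_inc lam = {x. x < lam \<and> strongly_inaccessible {..<x}}"

type_synonym 'o node = "'o \<times> ('o \<Rightarrow> bool)"

definition vanish_from :: "('o::wellorder \<Rightarrow> bool) \<Rightarrow> 'o \<Rightarrow> bool" where
  "vanish_from f a \<longleftrightarrow> (\<forall>y. a \<le> y \<longrightarrow> \<not> f y)"

definition tree_nodes :: "'o::wellorder \<Rightarrow> 'o node set" where
  "tree_nodes lam = {eta. fst eta < lam \<and> vanish_from (snd eta) (fst eta)}"

definition branches :: "'o::wellorder \<Rightarrow> ('o \<Rightarrow> bool) set" where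
  "branches lam = {f. vanish_from f lam}"

definition restr :: "'o::wellorder node \<Rightarrow> 'o \<Rightarrow> 'o node" where
  "restr eta s = (s, \<lambda>y. if y < s then snd eta y else False)"

definition init_seg :: "'o::wellorder node \<Rightarrow> 'o node \<Rightarrow> bool" where
  "init_seg eta nu \<longleftrightarrow> fst eta \<le> fst nu \<and> restr nu (fst eta) = eta"

definition osucc :: "'o::wellorder \<Rightarrow> 'o" where
  "osucc a = (LEAST y. a < y)"

definition ext :: "'o::wellorder node \<Rightarrow> bool \<Rightarrow> 'o node" where
  "ext eta i = (osucc (fst eta), (snd eta)(fst eta := i))"

definition is_limit :: "'o::wellorder \<Rightarrow> bool" where
  "is_limit d \<longleftrightarrow> (\<exists>y. y < d) \<and> (\<forall>y<d. \<exists>z. y < z \<and> z < d)"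

text \<open>Q I lam is Q_lambda, given the ideals I delta = id(Q_delta) for delta < lambda.
  False/True play the role of 0/1.\<close>
definition Q :: "('o::wellorder \<Rightarrow> ('o \<Rightarrow> bool) set set) \<Rightarrow> 'o \<Rightarrow> 'o node set set" where
  "Q I lam = {p. p \<subseteq> tree_nodes lam \<and>
     (\<forall>nu\<in>p. \<forall>s\<le>fst nu. restr nu s \<in> p) \<and>
     (\<exists>tau S N.
        (tau \<in> p \<and> ext tau False \<in> p \<and> ext tau True \<in> p \<and>
         (\<forall>nu\<in>p. ext nu False \<in> p \<and> ext nu True \<in> p \<longrightarrow> init_seg tau nu)) \<and>
        (\<forall>eta\<in>p. init_seg tau eta \<longrightarrow> ext eta False \<in> p \<and> ext eta True \<in> p) \<and>
        S \<subseteq> S_inc lam \<and> nowhere_stationary S {..<lam} \<and>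
        (\<forall>d\<in>S. N d \<in> I d) \<and>
        (\<forall>d<lam. is_limit d \<and> d \<notin> S \<longrightarrow>
           (\<forall>f. vanish_from f d \<longrightarrow> ((d, f) \<in> p \<longleftrightarrow> (\<forall>s<d. restr (d, f) s \<in> p)))) \<and>
        (\<forall>d\<in>S. \<forall>f. vanish_from f d \<longrightarrow>
           ((d, f) \<in> p \<longleftrightarrow> (\<forall>s<d. restr (d, f) s \<in> p) \<and> f \<notin> N d)))}"

definition body :: "'o::wellorder \<Rightarrow> 'o node set \<Rightarrow> ('o \<Rightarrow> bool) set" where
  "body lam p = {f \<in> branches lam. \<forall>a<lam. restr (a, f) a \<in> p}"

definition compatible :: "'a set set \<Rightarrow> 'a set \<Rightarrow> 'a set \<Rightarrow> bool" where
  "compatible P p q \<longleftrightarrow> (\<exists>r\<in>P. r \<subseteq> p \<and> r \<subseteq> q)"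

definition predense :: "'a set set \<Rightarrow> 'a set set \<Rightarrow> bool" where
  "predense P J \<longleftrightarrow> J \<subseteq> P \<and> (\<forall>p\<in>P. \<exists>q\<in>J. compatible P p q)"

definition set0 :: "'o::wellorder \<Rightarrow> 'o node set set \<Rightarrow> ('o \<Rightarrow> bool) set" where
  "set0 lam J = branches lam - (\<Union>q\<in>J. body lam q)"

definition idQ_step :: "('o::wellorder \<Rightarrow> ('o \<Rightarrow> bool) set set) \<Rightarrow> 'o \<Rightarrow> ('o \<Rightarrow> bool) set set" where
  "idQ_step I lam = {A. A \<subseteq> branches lam \<and>
     (\<exists>Js. (\<forall>i<lam. predense (Q I lam) (Js i)) \<and> A \<subseteq> (\<Union>i\<in>{..<lam}. set0 lam (Js i)))}"

definition idQ :: "'o::wellorder \<Rightarrow> ('o \<Rightarrow> bool) set set" where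
  "idQ = wfrec {(x, y). x < y} idQ_step"

definition QQ :: "'o::wellorder \<Rightarrow> 'o node set set" where
  "QQ lam = Q idQ lam"

definition max_antichain :: "'a set set \<Rightarrow> 'a set set \<Rightarrow> bool" where
  "max_antichain P A \<longleftrightarrow> A \<subseteq> P \<and>
     (\<forall>p\<in>A. \<forall>q\<in>A. p \<noteq> q \<longrightarrow> \<not> compatible P p q) \<and>
     (\<forall>p\<in>P. \<exists>q\<in>A. compatible P p q)"

definition Pr :: "'o::wellorder \<Rightarrow> bool" where
  "Pr lam \<longleftrightarrow> (\<exists>L. (\<forall>i<lam. max_antichain (QQ lam) (L i)) \<and>
     \<not> (\<exists>p\<in>QQ lam. body lam p \<subseteq> (\<Inter>i\<in>{..<lam}. \<Union>q\<in>L i. body lam q)))"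

definition S_pr :: "'o::wellorder set" where
  "S_pr = {lam. strongly_inaccessible {..<lam} \<and> Pr lam}"

definition nst_pr :: "'o::wellorder set set" where
  "nst_pr = {A. A \<subseteq> S_pr \<and> nowhere_stationary A UNIV}"

definition nst_S :: "'o::wellorder set \<Rightarrow> 'o set set" where
  "nst_S S = {A. A \<subseteq> S \<and> nowhere_stationary A UNIV}"

definition subseteq_star :: "'o::wellorder set \<Rightarrow> 'o set \<Rightarrow> bool" where
  "subseteq_star A B \<longleftrightarrow> (\<exists>x. \<forall>y\<in>A - B. y < x)"

definition unbounded_subfamily :: "'o::wellorder set set \<Rightarrow> 'o set set \<Rightarrow> bool" where
  "unbounded_subfamily fam F \<longleftrightarrow> F \<subseteq> fam \<and> \<not> (\<exists>B\<in>fam. \<forall>A\<in>F. subseteq_star A B)"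

definition le_star :: "('o::wellorder \<Rightarrow> 'o) \<Rightarrow> ('o \<Rightarrow> 'o) \<Rightarrow> bool" where
  "le_star f g \<longleftrightarrow> (\<exists>x. \<forall>i. x \<le> i \<longrightarrow> f i \<le> g i)"

definition b_unbounded :: "('o::wellorder \<Rightarrow> 'o) set \<Rightarrow> bool" where
  "b_unbounded B \<longleftrightarrow> \<not> (\<exists>g. \<forall>f\<in>B. le_star f g)"

text \<open>add(fam) \<le> b_kappa and b_kappa \<le> add(fam), as comparisons of least sizes.\<close>
definition add_le_b :: "'o::wellorder set set \<Rightarrow> bool" where
  "add_le_b fam \<longleftrightarrow> (\<forall>B::('o \<Rightarrow> 'o) set. b_unbounded B \<longrightarrow>
     (\<exists>F. unbounded_subfamily fam F \<and> (card_of F, card_of B) \<in> ordLeq))"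

definition b_le_add :: "'o::wellorder set set \<Rightarrow> bool" where
  "b_le_add fam \<longleftrightarrow> (\<forall>F. unbounded_subfamily fam F \<longrightarrow>
     (\<exists>B::('o \<Rightarrow> 'o) set. b_unbounded B \<and> (card_of B, card_of F) \<in> ordLeq))"

end

theory Submission
  imports Defs
begin

(* For f : kappa -> kappa the closure points of f form a club, so for non-reflecting S
   every set S - cl(f) is nowhere stationary.
   add <= b: if S - cl(f) \<subseteq>* B for all f in a family and B misses the club D, then the
   function sending x to the next point of S \<inter> D above x (which exists since S is
   stationary) eventually dominates every f of the family.
   b <= add: for nowhere stationary A pick a club C_A missing A and let f_A send x to the
   next point of C_A above x. If g eventually dominates every f_A, then each large closure
   point of g is a limit of C_A, hence lies in C_A, so A \<subseteq>* S - cl(g). *)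

section \<open>Consequences of inaccessibility\<close>

lemma strongly_inaccessible_cofinal_card:
  assumes "strongly_inaccessible (UNIV :: 'o::wellorder set)" and "cofinal_in X (UNIV :: 'o set)"
  shows "(card_of X, card_of (UNIV :: 'o set)) \<in> ordIso"
  using assms unfolding strongly_inaccessible_def by blast

lemma strongly_inaccessible_countable_card:
  assumes "strongly_inaccessible (UNIV :: 'o::wellorder set)" and "countable (X :: 'o set)"
  shows "(card_of X, card_of (UNIV :: 'o set)) \<in> ordLess"
proof (rule ccontr)
  assume "(card_of X, card_of (UNIV :: 'o set)) \<notin> ordLess"
  then have "(card_of (UNIV :: 'o set), card_of X) \<in> ordLeq"
    using not_ordLess_iff_ordLeq card_of_Well_order by blast
  then obtain f where "inj_on f (UNIV :: 'o set)" and "f ` UNIV \<subseteq> X"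
    using card_of_ordLeq by metis
  then have "countable (UNIV :: 'o set)"
    using assms(2) countable_subset countable_image_inj_on by metis
  then show False
    using assms(1) unfolding strongly_inaccessible_def by simp
qed

lemma strongly_inaccessible_small_bounded:
  assumes "strongly_inaccessible (UNIV :: 'o::wellorder set)"
    and "(card_of (X :: 'o set), card_of (UNIV :: 'o set)) \<in> ordLess"
  shows "\<exists>y. \<forall>x\<in>X. x < y"
proof (rule ccontr)
  assume "\<not> ?thesis"
  then have "cofinal_in X UNIV"
    unfolding cofinal_in_def by (auto simp: not_less)
  then show False
    using strongly_inaccessible_cofinal_card[OF assms(1)] assms(2) not_ordLess_ordIso by blast
qed

lemma strongly_inaccessible_countable_bounded:
  assumes "strongly_inaccessible (UNIV :: 'o::wellorder set)" and "countable (X :: 'o set)"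
  shows "\<exists>y. \<forall>x\<in>X. x < y"
  using strongly_inaccessible_small_bounded strongly_inaccessible_countable_card assms by blast

lemma strongly_inaccessible_gt_ex:
  assumes "strongly_inaccessible (UNIV :: 'o::wellorder set)"
  shows "\<exists>y. (x :: 'o) < y"
  using strongly_inaccessible_countable_bounded[OF assms, of "{x}"] by auto

lemma strongly_inaccessible_image_atMost_bounded:
  assumes "strongly_inaccessible (UNIV :: 'o::wellorder set)"
  shows "\<exists>y. \<forall>a\<le>(b :: 'o). (f a :: 'o) < y"
proof -
  obtain c where "b < c"
    using strongly_inaccessible_gt_ex[OF assms] by blast
  then have "(card_of (f ` {..b}), card_of {..<c}) \<in> ordLeq"
    using card_of_image card_of_mono1[of "{..b}" "{..<c}"] ordLeq_transitive by fastforce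
  moreover have "(card_of {..<c}, card_of (UNIV :: 'o set)) \<in> ordLess"
    using assms unfolding strongly_inaccessible_def by blast
  ultimately have "(card_of (f ` {..b}), card_of (UNIV :: 'o set)) \<in> ordLess"
    using ordLeq_ordLess_trans by blast
  then show ?thesis
    using strongly_inaccessible_small_bounded[OF assms] by blast
qed

lemma strongly_inaccessible_uncountable_cof:
  assumes "strongly_inaccessible (UNIV :: 'o::wellorder set)"
  shows "uncountable_cof (UNIV :: 'o set)"
  unfolding uncountable_cof_def
  using strongly_inaccessible_cofinal_card[OF assms] strongly_inaccessible_countable_card[OF assms]
    not_ordLess_ordIso by blast

section \<open>Clubs in kappa\<close>

definition closure_points :: "('o::wellorder \<Rightarrow> 'o) \<Rightarrow> 'o set" where
  "closure_points f = {g. \<forall>a<g. f a < g}"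

definition next_in :: "'o::wellorder set \<Rightarrow> 'o \<Rightarrow> 'o" where
  "next_in X x = (LEAST z. z \<in> X \<and> x < z)"

lemma next_in:
  assumes "\<exists>z\<in>X. x < z"
  shows "next_in X x \<in> X" and "x < next_in X x"
  using LeastI_ex[of "\<lambda>z. z \<in> X \<and> x < z"] assms unfolding next_in_def by auto

lemma ord_closed_in_closure_points: "ord_closed_in (closure_points f) UNIV"
  unfolding ord_closed_in_def closure_points_def using order.strict_trans by blast

lemma closure_points_cofinal:
  assumes si: "strongly_inaccessible (UNIV :: 'o::wellorder set)"
  shows "\<exists>g\<in>closure_points (f :: 'o \<Rightarrow> 'o). x \<le> g"
proof -
  have "\<forall>b. \<exists>y. b < y \<and> (\<forall>a\<le>b. f a < y)"
  proof
    fix b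
    obtain y1 y2 where "\<forall>a\<le>b. f a < y1" and "b < y2"
      using strongly_inaccessible_image_atMost_bounded[OF si, of b f]
        strongly_inaccessible_gt_ex[OF si, of b]
      by blast
    then show "\<exists>y. b < y \<and> (\<forall>a\<le>b. f a < y)"
      by (intro exI[of _ "max y1 y2"]) (auto simp: less_max_iff_disj)
  qed
  then obtain h where h: "\<forall>b. b < h b \<and> (\<forall>a\<le>b. f a < h b)"
    by (auto dest: choice)
  define orbit where "orbit n = (h ^^ n) x" for n
  define g where "g = (LEAST y. \<forall>z\<in>range orbit. z < y)"
  obtain y where "\<forall>z\<in>range orbit. z < y"
    using strongly_inaccessible_countable_bounded[OF si, of "range orbit"] by auto
  then have "\<forall>z\<in>range orbit. z < g"
    unfolding g_def by (rule LeastI)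
  then have above: "orbit n < g" for n
    by blast
  have "g \<in> closure_points f"
    unfolding closure_points_def
  proof (intro CollectI allI impI)
    fix a assume "a < g"
    then have "\<not> (\<forall>z\<in>range orbit. z < a)"
      unfolding g_def by (rule not_less_Least)
    then obtain n where "a \<le> orbit n"
      by (auto simp: not_less)
    then have "f a < h (orbit n)"
      using h by blast
    also have "h (orbit n) = orbit (Suc n)"
      by (simp add: orbit_def)
    also have "\<dots> < g"
      using above by blast
    finally show "f a < g" .
  qed
  moreover have "x \<le> g"
    using above[of 0] by (simp add: orbit_def)
  ultimately show ?thesis
    by blast
qed

lemma club_in_closure_points:
  assumes "strongly_inaccessible (UNIV :: 'o::wellorder set)"
  shows "club_in (closure_points (f :: 'o \<Rightarrow> 'o)) UNIV"
  using ord_closed_in_closure_points closure_points_cofinal[OF assms]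
  unfolding club_in_def cofinal_in_def by blast

lemma club_in_unbounded:
  assumes "strongly_inaccessible (UNIV :: 'o::wellorder set)" and "club_in C UNIV"
  shows "\<exists>z\<in>C. (x :: 'o) < z"
proof -
  obtain w where "x < w"
    using strongly_inaccessible_gt_ex[OF assms(1)] by blast
  moreover obtain z where "z \<in> C" and "w \<le> z"
    using assms(2) unfolding club_in_def cofinal_in_def by blast
  ultimately show ?thesis
    using less_le_trans by blast
qed

lemma club_in_inter_greaterThan:
  assumes si: "strongly_inaccessible (UNIV :: 'o::wellorder set)" and C: "club_in C UNIV"
  shows "club_in (C \<inter> {x<..}) (UNIV :: 'o set)"
proof -
  have "\<exists>z\<in>C \<inter> {x<..}. y \<le> z" for y
  proof -
    obtain z where "z \<in> C" and "max x y < z"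
      using club_in_unbounded[OF si C] by blast
    then show ?thesis
      by (intro bexI[of _ z]) auto
  qed
  moreover have "ord_closed_in (C \<inter> {x<..}) UNIV"
    unfolding ord_closed_in_def
  proof (intro ballI impI)
    fix y :: 'o assume lim: "(\<exists>a. a < y) \<and> (\<forall>a<y. \<exists>z\<in>C \<inter> {x<..}. a < z \<and> z < y)"
    then have "y \<in> C"
      using C unfolding club_in_def ord_closed_in_def by blast
    moreover have "x < y"
      using lim by (meson IntD2 greaterThan_iff order.strict_trans)
    ultimately show "y \<in> C \<inter> {x<..}"
      by simp
  qed
  ultimately show ?thesis
    unfolding club_in_def cofinal_in_def by blast
qed

lemma stationary_inter_club_unbounded:
  assumes "strongly_inaccessible (UNIV :: 'o::wellorder set)"
    and "stationary_in S UNIV" and "club_in D UNIV"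
  shows "\<exists>z\<in>S \<inter> D. (x :: 'o) < z"
  using assms(2) club_in_inter_greaterThan[OF assms(1,3), of x] unfolding stationary_in_def by blast

lemma closure_point_mem_club:
  assumes C: "club_in C UNIV"
    and dominated: "\<And>i. x \<le> i \<Longrightarrow> \<exists>z\<in>C. i < z \<and> z \<le> g i"
    and "x < y" and "y \<in> closure_points g"
  shows "y \<in> C"
proof -
  have "\<exists>z\<in>C. a < z \<and> z < y" if "a < y" for a
  proof -
    obtain z where "z \<in> C" "max a x < z" "z \<le> g (max a x)"
      using dominated[of "max a x"] by auto
    moreover have "g (max a x) < y"
      using assms(3,4) \<open>a < y\<close> unfolding closure_points_def by simp
    ultimately show ?thesis
      by auto
  qed
  then show ?thesis
    using C \<open>x < y\<close> unfolding club_in_def ord_closed_in_def by blast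
qed

section \<open>Nowhere stationary subsets of kappa\<close>

lemma nowhere_stationary_disjoint_club:
  assumes "strongly_inaccessible (UNIV :: 'o::wellorder set)"
    and "nowhere_stationary (A :: 'o set) UNIV"
  obtains C where "club_in C UNIV" and "A \<inter> C = {}"
proof -
  have "UNIV \<in> segs (UNIV :: 'o set)"
    unfolding segs_def by blast
  then have "\<not> stationary_in A UNIV"
    using assms(2) strongly_inaccessible_uncountable_cof[OF assms(1)]
    unfolding nowhere_stationary_def by auto
  then show ?thesis
    using that unfolding stationary_in_def by blast
qed

lemma nowhere_stationary_if_non_reflecting:
  assumes "non_reflecting S" and "A \<subseteq> S" and "club_in C UNIV" and "A \<inter> C = {}"
  shows "nowhere_stationary (A :: 'o::wellorder set) UNIV"
  unfolding nowhere_stationary_def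
proof (intro conjI ballI impI)
  fix E assume E: "E \<in> segs (UNIV :: 'o set)" "uncountable_cof E"
  show "\<not> stationary_in (A \<inter> E) E"
  proof (cases "E = UNIV")
    case True
    then show ?thesis
      using assms(3,4) unfolding stationary_in_def by auto
  next
    case False
    then obtain x where "E = {..<x}"
      using E(1) unfolding segs_def by blast
    then show ?thesis
      using assms(1,2) E(2) unfolding non_reflecting_def stationary_in_def by blast
  qed
qed simp

lemma nowhere_stationary_diff_closure_points:
  assumes "strongly_inaccessible (UNIV :: 'o::wellorder set)" and "non_reflecting S"
  shows "nowhere_stationary (S - closure_points (f :: 'o \<Rightarrow> 'o)) UNIV"
  using nowhere_stationary_if_non_reflecting[OF assms(2)] club_in_closure_points[OF assms(1)]
  by blast

section \<open>Comparing add with b\<close>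

lemma le_star_next_in_stationary:
  assumes "subseteq_star (S - closure_points f) B" and "B \<inter> D = {}"
    and unbounded: "\<And>x. \<exists>z\<in>S \<inter> D. x < z"
  shows "le_star f (next_in (S \<inter> D))"
proof -
  obtain x where x: "\<forall>y\<in>S - closure_points f - B. y < x"
    using assms(1) unfolding subseteq_star_def by blast
  have "f i \<le> next_in (S \<inter> D) i" if "x \<le> i" for i
  proof -
    let ?z = "next_in (S \<inter> D) i"
    have z: "?z \<in> S \<inter> D" "i < ?z"
      using next_in[OF unbounded[of i]] by blast+
    moreover have "\<not> ?z < x"
      using z(2) that by simp
    ultimately have "?z \<in> closure_points f"
      using x assms(2) by blast
    then show ?thesis
      using z(2) unfolding closure_points_def by (simp add: less_imp_le)
  qed
  then show ?thesis
    unfolding le_star_def by blast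
qed

lemma add_le_b_if_diff_closure_points_mem:
  assumes si: "strongly_inaccessible (UNIV :: 'o::wellorder set)"
    and "stationary_in S (UNIV :: 'o set)"
    and nst: "\<And>A. A \<in> fam \<Longrightarrow> nowhere_stationary A UNIV"
    and mem: "\<And>f. S - closure_points f \<in> fam"
  shows "add_le_b fam"
  unfolding add_le_b_def
proof (intro allI impI)
  fix B :: "('o \<Rightarrow> 'o) set" assume "b_unbounded B"
  define F where "F = (\<lambda>f. S - closure_points f) ` B"
  have "unbounded_subfamily fam F"
    unfolding unbounded_subfamily_def
  proof (intro conjI notI)
    show "F \<subseteq> fam"
      unfolding F_def using mem by blast
  next
    assume "\<exists>B'\<in>fam. \<forall>A\<in>F. subseteq_star A B'"
    then obtain B' where "B' \<in> fam" and bound: "\<forall>A\<in>F. subseteq_star A B'"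
      by blast
    then obtain D where "club_in D UNIV" and "B' \<inter> D = {}"
      using nowhere_stationary_disjoint_club[OF si] nst by metis
    then have "le_star f (next_in (S \<inter> D))" if "f \<in> B" for f
      using le_star_next_in_stationary stationary_inter_club_unbounded[OF si assms(2)]
        bound that unfolding F_def by blast
    then show False
      using \<open>b_unbounded B\<close> unfolding b_unbounded_def by blast
  qed
  moreover have "(card_of F, card_of B) \<in> ordLeq"
    unfolding F_def by (rule card_of_image)
  ultimately show "\<exists>F. unbounded_subfamily fam F \<and> (card_of F, card_of B) \<in> ordLeq"
    by blast
qed

lemma subseteq_star_diff_closure_points:
  assumes si: "strongly_inaccessible (UNIV :: 'o::wellorder set)"
    and "(A :: 'o set) \<subseteq> S" and "club_in C UNIV" and "A \<inter> C = {}"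
    and "le_star (next_in C) g"
  shows "subseteq_star A (S - closure_points g)"
proof -
  obtain x where x: "\<And>i. x \<le> i \<Longrightarrow> next_in C i \<le> g i"
    using assms(5) unfolding le_star_def by blast
  have "\<exists>z\<in>C. i < z \<and> z \<le> g i" if "x \<le> i" for i
    using next_in[OF club_in_unbounded[OF si assms(3)]] x[OF that] by blast
  then have "y \<le> x" if "y \<in> A - (S - closure_points g)" for y
    using closure_point_mem_club[OF assms(3)] that assms(2,4) by force
  moreover obtain x' where "x < x'"
    using strongly_inaccessible_gt_ex[OF si] by blast
  ultimately show ?thesis
    unfolding subseteq_star_def using le_less_trans by blast
qed

lemma b_le_add_nst_S:
  assumes si: "strongly_inaccessible (UNIV :: 'o::wellorder set)" and "non_reflecting S"
  shows "b_le_add (nst_S (S :: 'o set))"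
  unfolding b_le_add_def
proof (intro allI impI)
  fix F assume F: "unbounded_subfamily (nst_S S) F"
  then have nst: "A \<subseteq> S" "nowhere_stationary A UNIV" if "A \<in> F" for A
    using that unfolding unbounded_subfamily_def nst_S_def by blast+
  have "\<forall>A\<in>F. \<exists>C. club_in C UNIV \<and> A \<inter> C = {}"
    using nowhere_stationary_disjoint_club[OF si nst(2)] by metis
  then obtain C where C: "\<And>A. A \<in> F \<Longrightarrow> club_in (C A) UNIV \<and> A \<inter> C A = {}"
    by metis
  define B where "B = (\<lambda>A. next_in (C A)) ` F"
  have "b_unbounded B"
    unfolding b_unbounded_def
  proof
    assume "\<exists>g. \<forall>f\<in>B. le_star f g"
    then obtain g where g: "\<And>A. A \<in> F \<Longrightarrow> le_star (next_in (C A)) g"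
      unfolding B_def by blast
    have "subseteq_star A (S - closure_points g)" if "A \<in> F" for A
      using subseteq_star_diff_closure_points[OF si nst(1)[OF that] _ _ g[OF that]] C[OF that]
      by blast
    moreover have "S - closure_points g \<in> nst_S S"
      unfolding nst_S_def using nowhere_stationary_diff_closure_points[OF si assms(2)] by blast
    ultimately show False
      using F unfolding unbounded_subfamily_def by blast
  qed
  moreover have "(card_of B, card_of F) \<in> ordLeq"
    unfolding B_def by (rule card_of_image)
  ultimately show "\<exists>B :: ('o \<Rightarrow> 'o) set. b_unbounded B \<and> (card_of B, card_of F) \<in> ordLeq"
    by blast
qed

theorem theorem5p13:
  fixes S :: "'o::wellorder set"
  assumes "strongly_inaccessible (UNIV :: 'o set)"
    and "S \<subseteq> S_pr"
    and "stationary_in S UNIV"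
    and "non_reflecting S"
  shows "add_le_b (nst_pr :: 'o set set) \<and>
         (add_le_b (nst_S S) \<and> b_le_add (nst_S S))"
proof (intro conjI)
  have nst: "nowhere_stationary (S - closure_points f) UNIV" for f
    using nowhere_stationary_diff_closure_points[OF assms(1,4)] .
  show "add_le_b (nst_pr :: 'o set set)"
  proof (rule add_le_b_if_diff_closure_points_mem[OF assms(1,3)])
    show "nowhere_stationary A UNIV" if "A \<in> nst_pr" for A :: "'o set"
      using that unfolding nst_pr_def by blast
    show "S - closure_points f \<in> nst_pr" for f
      using nst assms(2) unfolding nst_pr_def by blast
  qed
  show "add_le_b (nst_S S)"
  proof (rule add_le_b_if_diff_closure_points_mem[OF assms(1,3)])
    show "nowhere_stationary A UNIV" if "A \<in> nst_S S" for A :: "'o set"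
      using that unfolding nst_S_def by blast
    show "S - closure_points f \<in> nst_S S" for f
      using nst unfolding nst_S_def by blast
  qed
  show "b_le_add (nst_S S)"
    using b_le_add_nst_S[OF assms(1,4)] .
qed

end
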